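(* Let $X$ be a real Hilbert space, let $\alpha\in\mathbb{R}\setminus\{0\}$ and $\beta>0$, equip $X\times X\times\mathbb{R}$ with the norm $\|(u,v,\gamma)\|=\sqrt{\|u\|^2+\|v\|^2+\beta^2|\gamma|^2}$, and let $\widetilde{C}_\alpha=\{(u,v,\gamma)\in X\times X\times\mathbb{R}: \|u\|^2-\|v\|^2=2\alpha\gamma\}$. Let $(u_0,v_0,\gamma_0)\in X\times X\times\mathbb{R}$. Then the problem of minimizing $f(u,v,\gamma)=\|u-u_0\|^2+\|v-v_0\|^2+\beta^2|\gamma-\gamma_0|^2$ subject to $\|u\|^2-\|v\|^2-2\alpha\gamma=0$ always has a solution, i.e., $P_{\widetilde{C}_\alpha}(u_0,v_0,\gamma_0)\neq\varnothing$. Moreover, if $(u,v,\gamma)\in P_{\widetilde{C}_\alpha}(u_0,v_0,\gamma_0)$, then $u,u_0$ are conically dependent and $v,v_0$ are conically dependent.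
   Context: $P_S(z)=\operatorname{argmin}_{w\in S}\|w-z\|$ with respect to the weighted norm above. Two vectors $x,x_0\in X$ are conically dependent if there exists $s\geq0$ such that $x=sx_0$ or $x_0=sx$. *)

theory Defs
  imports "HOL-Analysis.Analysis"
begin

definition wnorm :: "real \<Rightarrow> ('a::real_inner \<times> 'a \<times> real) \<Rightarrow> real" where
  "wnorm \<beta> w = (case w of (u, v, \<gamma>) \<Rightarrow>
      sqrt ((norm u)\<^sup>2 + (norm v)\<^sup>2 + \<beta>\<^sup>2 * \<bar>\<gamma>\<bar>\<^sup>2))"

definition Ctilde :: "real \<Rightarrow> ('a::real_inner \<times> 'a \<times> real) set" where
  "Ctilde \<alpha> = {(u, v, \<gamma>). (norm u)\<^sup>2 - (norm v)\<^sup>2 = 2 * \<alpha> * \<gamma>}"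

definition wproj :: "real \<Rightarrow> ('a::real_inner \<times> 'a \<times> real) set \<Rightarrow> ('a \<times> 'a \<times> real) \<Rightarrow> ('a \<times> 'a \<times> real) set" where
  "wproj \<beta> S z = {w \<in> S. \<forall>w'\<in>S. wnorm \<beta> (w - z) \<le> wnorm \<beta> (w' - z)}"

definition conically_dependent :: "'a::real_vector \<Rightarrow> 'a \<Rightarrow> bool" where
  "conically_dependent x x0 \<longleftrightarrow> (\<exists>s::real. s \<ge> 0 \<and> (x = s *\<^sub>R x0 \<or> x0 = s *\<^sub>R x))"

end

theory Submission
  imports Defs
begin

(* Both the constraint and the objective see u and v only through their norms and their
   distances to u0 and v0. For a prescribed norm, the nearest point to u0 lies on the ray
   through u0, at distance |norm u - norm u0| (reverse triangle inequality), and only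
   there (equality in Cauchy-Schwarz). Hence the problem reduces to minimizing a continuous
   function of (norm u, norm v) over a closed subset of the plane with bounded sublevel sets,
   which has a minimizer; and any projection must place u and v on the rays through u0 and v0. *)

lemma continuous_attains_inf_bounded_sublevel:
  fixes f :: "'a::heine_borel \<Rightarrow> real"
  assumes "closed S" "continuous_on S f" "x0 \<in> S"
    and "bounded {x \<in> S. f x \<le> f x0}"
  shows "\<exists>x\<in>S. \<forall>y\<in>S. f x \<le> f y"
proof -
  let ?K = "{x \<in> S. f x \<le> f x0}"
  have "closed ?K"
    using assms(2) continuous_on_const assms(1) by (rule continuous_on_closed_Collect_le)
  with assms(4) have "compact ?K"
    by (simp add: compact_eq_bounded_closed)
  moreover have "?K \<noteq> {}"
    using assms(3) by blast
  moreover have "continuous_on ?K f"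
    using assms(2) by (rule continuous_on_subset) blast
  ultimately have "\<exists>x\<in>?K. \<forall>y\<in>?K. f x \<le> f y"
    by (rule continuous_attains_inf)
  then obtain x where x: "x \<in> ?K" and min: "\<forall>y\<in>?K. f x \<le> f y"
    by blast
  have "f x \<le> f y" if "y \<in> S" for y
  proof (cases "f y \<le> f x0")
    case True
    with min that show ?thesis by blast
  next
    case False
    with x show ?thesis by simp
  qed
  with x show ?thesis by blast
qed

lemma closed_range_norm: "closed (range (norm :: 'a::real_normed_vector \<Rightarrow> real))"
proof (cases "\<exists>x::'a. x \<noteq> 0")
  case True
  then obtain x :: 'a where "x \<noteq> 0" by blast
  then have "norm (t *\<^sub>R sgn x) = t" if "t \<ge> 0" for t
    using that by (simp add: norm_sgn)
  then have "{0..} \<subseteq> range (norm :: 'a \<Rightarrow> real)"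
    by (metis atLeast_iff rangeI subsetI)
  then have "range (norm :: 'a \<Rightarrow> real) = {0..}" by fastforce
  then show ?thesis by simp
next
  case False
  then have "range (norm :: 'a \<Rightarrow> real) = {0}" by auto
  then show ?thesis by simp
qed

lemma exists_norm_eq_on_ray:
  fixes x0 :: "'a::real_normed_vector"
  assumes "r \<in> range (norm :: 'a \<Rightarrow> real)"
  shows "\<exists>x::'a. norm x = r \<and> norm (x - x0) = \<bar>r - norm x0\<bar>"
proof (cases "x0 = 0")
  case True
  then show ?thesis using assms by auto
next
  case False
  have "r *\<^sub>R sgn x0 - x0 = (r - norm x0) *\<^sub>R sgn x0"
    using False by (simp add: sgn_div_norm algebra_simps)
  moreover have "r \<ge> 0" using assms by auto
  ultimately show ?thesis
    using False by (intro exI[of _ "r *\<^sub>R sgn x0"]) (simp add: norm_sgn)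
qed

lemma power2_diff_norm_le: "(norm x - norm y)\<^sup>2 \<le> (norm (x - y))\<^sup>2"
  using power_mono[OF norm_triangle_ineq3, of x y 2] by simp

lemma conically_dependent_if_nearest_on_sphere:
  fixes x x0 :: "'a::real_inner"
  assumes nearest: "\<And>y. norm y = norm x \<Longrightarrow> norm (x - x0) \<le> norm (y - x0)"
  shows "conically_dependent x x0"
proof -
  obtain y where y: "norm y = norm x" "norm (y - x0) = \<bar>norm x - norm x0\<bar>"
    using exists_norm_eq_on_ray[of "norm x" x0] by blast
  have "(norm (x - x0))\<^sup>2 \<le> (norm x - norm x0)\<^sup>2"
    using nearest[OF y(1)] y(2) by (metis norm_ge_zero power2_abs power_mono)
  moreover have "(norm (x - x0))\<^sup>2 = (norm x)\<^sup>2 - 2 * (x \<bullet> x0) + (norm x0)\<^sup>2"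
    by (simp add: power2_norm_eq_inner inner_diff_left inner_diff_right inner_commute)
  ultimately have "x \<bullet> x0 \<ge> norm x * norm x0"
    by (simp add: power2_diff)
  then have aligned: "norm x *\<^sub>R x0 = norm x0 *\<^sub>R x"
    using norm_cauchy_schwarz[of x x0] norm_cauchy_schwarz_eq[of x x0] by linarith
  show ?thesis
  proof (cases "x = 0")
    case True
    then show ?thesis
      unfolding conically_dependent_def by (intro exI[of _ 0]) simp
  next
    case False
    then have "x0 = inverse (norm x) *\<^sub>R (norm x *\<^sub>R x0)" by simp
    also have "\<dots> = (norm x0 / norm x) *\<^sub>R x"
      by (simp add: aligned divide_inverse_commute)
    finally show ?thesis
      unfolding conically_dependent_def by (intro exI[of _ "norm x0 / norm x"]) simp
  qed
qed

lemma wnorm_diff: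
  "wnorm \<beta> ((u, v, \<gamma>) - (u0, v0, \<gamma>0)) =
     sqrt ((norm (u - u0))\<^sup>2 + (norm (v - v0))\<^sup>2 + \<beta>\<^sup>2 * (\<gamma> - \<gamma>0)\<^sup>2)"
  by (simp add: wnorm_def)

(* The squared weighted distance of (u, v, \<gamma>) \<in> Ctilde \<alpha> from (u0, v0, \<gamma>0) when u, v lie on
   the rays through u0, v0, as a function of (a, b) = (norm u, norm v), with a0 = norm u0, b0 = norm v0. *)
definition Ctilde_reduced_cost ::
  "real \<Rightarrow> real \<Rightarrow> real \<Rightarrow> real \<Rightarrow> real \<Rightarrow> real \<times> real \<Rightarrow> real" where
  "Ctilde_reduced_cost \<alpha> \<beta> a0 b0 \<gamma>0 =
     (\<lambda>(a, b). (a - a0)\<^sup>2 + (b - b0)\<^sup>2 + \<beta>\<^sup>2 * ((a\<^sup>2 - b\<^sup>2) / (2 * \<alpha>) - \<gamma>0)\<^sup>2)"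

lemma Ctilde_reduced_cost_le:
  assumes "\<alpha> \<noteq> 0" "(u, v, \<gamma>) \<in> Ctilde \<alpha>"
  shows "Ctilde_reduced_cost \<alpha> \<beta> (norm u0) (norm v0) \<gamma>0 (norm u, norm v)
           \<le> (norm (u - u0))\<^sup>2 + (norm (v - v0))\<^sup>2 + \<beta>\<^sup>2 * (\<gamma> - \<gamma>0)\<^sup>2"
proof -
  have "\<gamma> = ((norm u)\<^sup>2 - (norm v)\<^sup>2) / (2 * \<alpha>)"
    using assms by (simp add: Ctilde_def)
  then show ?thesis
    using power2_diff_norm_le[of u u0] power2_diff_norm_le[of v v0]
    by (simp add: Ctilde_reduced_cost_def)
qed

lemma Ctilde_reduced_cost_attains_min:
  assumes "\<alpha> \<noteq> 0"
  defines "R \<equiv> range (norm :: 'a::real_normed_vector \<Rightarrow> real)"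
  shows "\<exists>p\<in>R \<times> R. \<forall>q\<in>R \<times> R. Ctilde_reduced_cost \<alpha> \<beta> a0 b0 \<gamma>0 p
                                  \<le> Ctilde_reduced_cost \<alpha> \<beta> a0 b0 \<gamma>0 q"
proof (rule continuous_attains_inf_bounded_sublevel)
  let ?g = "Ctilde_reduced_cost \<alpha> \<beta> a0 b0 \<gamma>0"
  show "closed (R \<times> R)"
    unfolding R_def by (intro closed_Times closed_range_norm)
  show "continuous_on (R \<times> R) ?g"
    unfolding Ctilde_reduced_cost_def case_prod_unfold
    using assms(1) by (intro continuous_intros) auto
  show "(0, 0) \<in> R \<times> R"
    unfolding R_def by (metis SigmaI norm_zero rangeI)
  let ?M = "?g (0, 0)"
  have bounds: "\<bar>a - a0\<bar> \<le> sqrt ?M \<and> \<bar>b - b0\<bar> \<le> sqrt ?M" if "?g (a, b) \<le> ?M" for a b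
  proof -
    have "?g (a, b) = (a - a0)\<^sup>2 + (b - b0)\<^sup>2 + \<beta>\<^sup>2 * ((a\<^sup>2 - b\<^sup>2) / (2 * \<alpha>) - \<gamma>0)\<^sup>2"
      by (simp add: Ctilde_reduced_cost_def)
    moreover have "0 \<le> \<beta>\<^sup>2 * ((a\<^sup>2 - b\<^sup>2) / (2 * \<alpha>) - \<gamma>0)\<^sup>2" by simp
    ultimately have "(a - a0)\<^sup>2 \<le> ?M" "(b - b0)\<^sup>2 \<le> ?M"
      using that zero_le_power2[of "a - a0"] zero_le_power2[of "b - b0"] by linarith+
    then show ?thesis
      using real_le_rsqrt[of "\<bar>a - a0\<bar>"] real_le_rsqrt[of "\<bar>b - b0\<bar>"] by simp
  qed
  then have "{p \<in> R \<times> R. ?g p \<le> ?M}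
      \<subseteq> {a0 - sqrt ?M..a0 + sqrt ?M} \<times> {b0 - sqrt ?M..b0 + sqrt ?M}"
    by (auto dest!: bounds simp: abs_le_iff)
  then show "bounded {p \<in> R \<times> R. ?g p \<le> ?M}"
    by (rule bounded_subset[OF bounded_Times[OF bounded_closed_interval bounded_closed_interval]])
qed

lemma wproj_Ctilde_nonempty:
  fixes u0 v0 :: "'a::real_inner"
  assumes "\<alpha> \<noteq> 0"
  shows "wproj \<beta> (Ctilde \<alpha>) (u0, v0, \<gamma>0) \<noteq> {}"
proof -
  let ?g = "Ctilde_reduced_cost \<alpha> \<beta> (norm u0) (norm v0) \<gamma>0"
  let ?R = "range (norm :: 'a \<Rightarrow> real)"
  have "\<exists>p\<in>?R \<times> ?R. \<forall>q\<in>?R \<times> ?R. ?g p \<le> ?g q"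
    by (rule Ctilde_reduced_cost_attains_min[OF assms])
  then obtain p where p: "p \<in> ?R \<times> ?R" and min: "\<And>q. q \<in> ?R \<times> ?R \<Longrightarrow> ?g p \<le> ?g q"
    by blast
  obtain a b where p_eq: "p = (a, b)" by (cases p)
  have ab: "a \<in> ?R" "b \<in> ?R"
    using p unfolding p_eq by auto
  obtain u where u: "norm u = a" "norm (u - u0) = \<bar>a - norm u0\<bar>"
    using exists_norm_eq_on_ray[OF ab(1), of u0] by blast
  obtain v where v: "norm v = b" "norm (v - v0) = \<bar>b - norm v0\<bar>"
    using exists_norm_eq_on_ray[OF ab(2), of v0] by blast
  define \<gamma> where "\<gamma> = (a\<^sup>2 - b\<^sup>2) / (2 * \<alpha>)"
  have "(u, v, \<gamma>) \<in> wproj \<beta> (Ctilde \<alpha>) (u0, v0, \<gamma>0)"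
    unfolding wproj_def
  proof (intro CollectI conjI ballI)
    show "(u, v, \<gamma>) \<in> Ctilde \<alpha>"
      using u v assms by (simp add: Ctilde_def \<gamma>_def)
    fix w :: "'a \<times> 'a \<times> real"
    assume w: "w \<in> Ctilde \<alpha>"
    obtain u' v' \<gamma>' where w_eq: "w = (u', v', \<gamma>')" by (cases w) auto
    have "(norm (u - u0))\<^sup>2 + (norm (v - v0))\<^sup>2 + \<beta>\<^sup>2 * (\<gamma> - \<gamma>0)\<^sup>2 = ?g (a, b)"
      using u v by (simp add: Ctilde_reduced_cost_def \<gamma>_def)
    also have "\<dots> \<le> ?g (norm u', norm v')"
      unfolding p_eq[symmetric] by (intro min SigmaI rangeI)
    also have "\<dots> \<le> (norm (u' - u0))\<^sup>2 + (norm (v' - v0))\<^sup>2 + \<beta>\<^sup>2 * (\<gamma>' - \<gamma>0)\<^sup>2"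
      using Ctilde_reduced_cost_le[OF assms w[unfolded w_eq]] .
    finally show "wnorm \<beta> ((u, v, \<gamma>) - (u0, v0, \<gamma>0)) \<le> wnorm \<beta> (w - (u0, v0, \<gamma>0))"
      unfolding w_eq wnorm_diff by simp
  qed
  then show ?thesis by blast
qed

lemma wproj_Ctilde_conically_dependent:
  fixes u0 v0 :: "'a::real_inner"
  assumes "(u, v, \<gamma>) \<in> wproj \<beta> (Ctilde \<alpha>) (u0, v0, \<gamma>0)"
  shows "conically_dependent u u0 \<and> conically_dependent v v0"
proof
  have C: "(norm u)\<^sup>2 - (norm v)\<^sup>2 = 2 * \<alpha> * \<gamma>"
    using assms by (simp add: wproj_def Ctilde_def)
  have nearest: "wnorm \<beta> ((u, v, \<gamma>) - (u0, v0, \<gamma>0)) \<le> wnorm \<beta> (w - (u0, v0, \<gamma>0))"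
    if "w \<in> Ctilde \<alpha>" for w
    using assms that by (simp add: wproj_def)
  show "conically_dependent u u0"
  proof (rule conically_dependent_if_nearest_on_sphere)
    fix y :: 'a assume "norm y = norm u"
    with C have "(y, v, \<gamma>) \<in> Ctilde \<alpha>" by (simp add: Ctilde_def)
    from nearest[OF this] show "norm (u - u0) \<le> norm (y - u0)"
      unfolding wnorm_diff by simp
  qed
  show "conically_dependent v v0"
  proof (rule conically_dependent_if_nearest_on_sphere)
    fix y :: 'a assume "norm y = norm v"
    with C have "(u, y, \<gamma>) \<in> Ctilde \<alpha>" by (simp add: Ctilde_def)
    from nearest[OF this] show "norm (v - v0) \<le> norm (y - v0)"
      unfolding wnorm_diff by simp
  qed
qed

theorem mainTheorem3:
  fixes \<alpha> \<beta> \<gamma>0 :: real and u0 v0 :: "'a::{real_inner, complete_space}"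
  assumes "\<alpha> \<noteq> 0" and "\<beta> > 0"
  shows "wproj \<beta> (Ctilde \<alpha>) (u0, v0, \<gamma>0) \<noteq> {} \<and>
    (\<forall>u v \<gamma>. (u, v, \<gamma>) \<in> wproj \<beta> (Ctilde \<alpha>) (u0, v0, \<gamma>0) \<longrightarrow>
       conically_dependent u u0 \<and> conically_dependent v v0)"
  using wproj_Ctilde_nonempty[OF assms(1)] wproj_Ctilde_conically_dependent by blast

end
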